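(* Let $q$ be a prime power and let $1\le t_1<\cdots<t_r<n$ be divisors of $n$ such that $t_i$ divides $t_{i+1}$ for $1\le i\le r-1$. Let $\mathcal{F}=(\mathcal{F}_1,\ldots,\mathcal{F}_r)=(\mathbb{F}_{q^{t_1}},\ldots,\mathbb{F}_{q^{t_r}})$ be the Galois flag of this type on $\mathbb{F}_{q^n}$ and let $\beta\in\mathbb{F}_{q^n}^*$. For $1\le i\le r$ write $\mathrm{Stab}_\beta(\mathcal{F}_i)=\{\gamma\in\langle\beta\rangle:\mathcal{F}_i\gamma=\mathcal{F}_i\}=\langle\beta\rangle\cap\mathbb{F}_{q^{t_i}}^*$. Then $d_f(\mathrm{Orb}_\beta(\mathcal{F}))\in\{0,2t_1,2(t_1+t_2),\ldots,2(t_1+\cdots+t_r)\}$. Moreover: (1) $d_f(\mathrm{Orb}_\beta(\mathcal{F}))=0$ if and only if $\mathrm{Stab}_\beta(\mathcal{F}_1)=\mathrm{Stab}_\beta(\mathcal{F}_r)=\langle\beta\rangle$; (2) $d_f(\mathrm{Orb}_\beta(\mathcal{F}))=2\sum_{i=1}^r t_i$ if and only if $\mathrm{Stab}_\beta(\mathcal{F}_1)=\mathrm{Stab}_\beta(\mathcal{F}_r)\neq\langle\beta\rangle$; (3) $d_f(\mathrm{Orb}_\beta(\mathcal{F}))=2\sum_{i=1}^{j-1}t_i$ if and only if $\mathrm{Stab}_\beta(\mathcal{F}_1)\neq\mathrm{Stab}_\beta(\mathcal{F}_r)$ and $j\in\{2,\ldots,r\}$ is the minimum index such that $\mathrm{S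tab}_\beta(\mathcal{F}_1)\subsetneq\mathrm{Stab}_\beta(\mathcal{F}_j)$.
   Context: $\mathbb{F}_{q^n}$ is regarded as an $\mathbb{F}_q$-vector space. For $\gamma\in\mathbb{F}_{q^n}^*$, $\mathcal{U}\gamma=\{u\gamma:u\in\mathcal{U}\}$ and $\mathcal{F}\gamma=(\mathcal{F}_1\gamma,\ldots,\mathcal{F}_r\gamma)$. For $\beta$ of multiplicative order $|\beta|$, $\mathrm{Orb}_\beta(\mathcal{F})=\{\mathcal{F}\beta^j:0\le j\le|\beta|-1\}$. Subspace distance: $d_S(\mathcal{U},\mathcal{V})=\dim(\mathcal{U}+\mathcal{V})-\dim(\mathcal{U}\cap\mathcal{V})$; flag distance $d_f(\mathcal{F},\mathcal{F}')=\sum_{i=1}^r d_S(\mathcal{F}_i,\mathcal{F}'_i)$. The minimum distance $d_f(\mathcal{C})$ of a set of flags is the minimum flag distance between distinct elements, and $0$ if $|\mathcal{C}|=1$. *)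

theory Defs
  imports "HOL-Computational_Algebra.Primes" "HOL-Library.Cardinality"
begin

text \<open>The ambient field F_{q^n} is a finite field type 'a with CARD('a) = q^n.\<close>

definition prime_power :: "nat \<Rightarrow> bool" where
  "prime_power q \<longleftrightarrow> (\<exists>p k. prime p \<and> k > 0 \<and> q = p ^ k)"

definition subfield_of_order :: "nat \<Rightarrow> nat \<Rightarrow> 'a::{field,finite} set" where
  "subfield_of_order q t = {x. x ^ (q ^ t) = x}"

definition sdim :: "nat \<Rightarrow> 'a set \<Rightarrow> nat" where
  "sdim q U = (THE k. card U = q ^ k)"

definition ssum :: "'a::plus set \<Rightarrow> 'a set \<Rightarrow> 'a set" where
  "ssum U V = {u + v | u v. u \<in> U \<and> v \<in> V}"

definition subspace_dist :: "nat \<Rightarrow> 'a::plus set \<Rightarrow> 'a set \<Rightarrow> nat" where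
  "subspace_dist q U V = sdim q (ssum U V) - sdim q (U \<inter> V)"

definition flag_dist :: "nat \<Rightarrow> 'a::plus set list \<Rightarrow> 'a set list \<Rightarrow> nat" where
  "flag_dist q F G = sum_list (map2 (subspace_dist q) F G)"

definition set_scale :: "'a::times set \<Rightarrow> 'a \<Rightarrow> 'a set" where
  "set_scale U \<gamma> = (\<lambda>u. u * \<gamma>) ` U"

definition flag_scale :: "'a::times set list \<Rightarrow> 'a \<Rightarrow> 'a set list" where
  "flag_scale F \<gamma> = map (\<lambda>U. set_scale U \<gamma>) F"

definition mult_order :: "'a::monoid_mult \<Rightarrow> nat" where
  "mult_order \<beta> = (LEAST k. k > 0 \<and> \<beta> ^ k = 1)"

definition orbit :: "'a::monoid_mult \<Rightarrow> 'a set list \<Rightarrow> 'a set list set" where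
  "orbit \<beta> F = {flag_scale F (\<beta> ^ j) | j. j \<le> mult_order \<beta> - 1}"

definition cyc :: "'a::monoid_mult \<Rightarrow> 'a set" where
  "cyc \<beta> = {\<beta> ^ j | j. True}"

definition stab :: "'a::monoid_mult \<Rightarrow> 'a set \<Rightarrow> 'a set" where
  "stab \<beta> U = {\<gamma> \<in> cyc \<beta>. set_scale U \<gamma> = U}"

definition min_flag_dist :: "nat \<Rightarrow> 'a::plus set list set \<Rightarrow> nat" where
  "min_flag_dist q C = (if card C \<le> 1 then 0
     else Min {flag_dist q F G | F G. F \<in> C \<and> G \<in> C \<and> F \<noteq> G})"

definition galois_flag :: "nat \<Rightarrow> nat \<Rightarrow> (nat \<Rightarrow> nat) \<Rightarrow> 'a::{field,finite} set list" where
  "galois_flag q r t = map (\<lambda>i. subfield_of_order q (t i)) [1..<r+1]"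

end

theory Submission
  imports Defs "HOL-Number_Theory.Residues" "HOL-Computational_Algebra.Polynomial"
begin

text \<open>
  For \<open>a \<noteq> 0\<close> the translate \<open>K a\<close> of the subfield \<open>K = F_{q^t}\<close> is an \<open>F_q\<close>-subspace of
  dimension \<open>t\<close>, and \<open>K a = K b\<close> iff \<open>b / a \<in> K\<close>; otherwise \<open>K a \<inter> K b = 0\<close> and the two
  translates are at distance \<open>2 t\<close>. Hence the translates of the Galois flag by \<open>a\<close> and \<open>b\<close> are at
  distance the sum of the \<open>2 t_i\<close> over those \<open>i\<close> with \<open>b / a \<notin> F_{q^{t_i}}\<close>; as the subfields
  are nested, this is \<open>2 (t_1 + ... + t_{j-1})\<close> for the first \<open>j\<close> with \<open>b / a \<in> F_{q^{t_j}}\<close>.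
  Minimising over \<open>b / a \<in> \<langle>\<beta>\<rangle>\<close> outside \<open>F_{q^{t_1}}\<close> makes \<open>j\<close> the first index at which
  the stabiliser \<open>\<langle>\<beta>\<rangle> \<inter> F_{q^{t_j}}\<close> is larger than \<open>\<langle>\<beta>\<rangle> \<inter> F_{q^{t_1}}\<close>.
\<close>

section \<open>Finite fields\<close>

lemma power_card_minus_one_eq_one:
  fixes x :: "'a::{field,finite}"
  assumes "x \<noteq> 0"
  shows "x ^ (CARD('a) - 1) = 1"
proof -
  let ?U = "UNIV - {0::'a}"
  have "(\<Prod>y\<in>?U. x * y) = (\<Prod>y\<in>?U. y)"
    by (rule prod.reindex_bij_witness[of _ "\<lambda>y. y / x" "\<lambda>y. x * y"]) (use assms in auto)
  moreover have "(\<Prod>y\<in>?U. x * y) = x ^ (CARD('a) - 1) * (\<Prod>y\<in>?U. y)"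
    by (simp add: prod.distrib card_Diff_singleton)
  moreover have "(\<Prod>y\<in>?U. y) \<noteq> 0" by simp
  ultimately show ?thesis by simp
qed

lemma two_le_card_field: "2 \<le> CARD('a::{field,finite})"
  using card_mono[of UNIV "{0::'a, 1}"] by simp

lemma card_roots_of_unity_le:
  assumes "M > 0"
  shows "card {x::'a::idom. x ^ M = 1} \<le> M"
proof -
  define p :: "'a poly" where "p = monom 1 M - 1"
  have poly_p: "poly p x = x ^ M - 1" for x by (simp add: p_def poly_monom)
  have "p \<noteq> 0" using poly_p[of 0] assms by (auto simp: power_0_left)
  then have "card {x. poly p x = 0} \<le> degree p" by (rule card_poly_roots_bound)
  also have "degree p \<le> M"
    unfolding p_def using degree_diff_le_max[of "monom (1::'a) M" 1] by (simp add: degree_monom_eq)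
  finally show ?thesis by (simp add: poly_p)
qed

lemma card_roots_of_unity_eq:
  assumes "M dvd CARD('a::{field,finite}) - 1"
  shows "card {x::'a. x ^ M = 1} = M"
proof -
  \<comment> \<open>The \<open>M\<close>-th power map sends the \<open>M * k\<close> units into the \<open>k\<close>-th roots of unity,
    and its fibres are cosets of \<open>H\<close>; hence \<open>M * k \<le> k * card H\<close>.\<close>
  define H where "H = {x::'a. x ^ M = 1}"
  obtain k where k: "CARD('a) - 1 = M * k" using assms by blast
  have "M > 0" "k > 0" using k two_le_card_field[where 'a='a] by (auto intro!: Nat.gr0I)
  let ?U = "UNIV - {0::'a}"
  let ?f = "\<lambda>x::'a. x ^ M"
  have "?f x ^ k = 1" if "x \<in> ?U" for x
    using power_card_minus_one_eq_one[of x] that by (metis k power_mult DiffD2 singletonI)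
  then have "?f ` ?U \<subseteq> {y. y ^ k = 1}" by blast
  then have card_image: "card (?f ` ?U) \<le> k"
    using card_mono[OF finite] card_roots_of_unity_le[OF \<open>k > 0\<close>, where 'a='a] by (meson le_trans)
  have card_fibre: "card {x \<in> ?U. ?f x = ?f x0} \<le> card H" if "x0 \<in> ?U" for x0
  proof -
    have "{x \<in> ?U. ?f x = ?f x0} \<subseteq> (\<lambda>h. x0 * h) ` H"
    proof
      fix x assume "x \<in> {x \<in> ?U. ?f x = ?f x0}"
      then have "x = x0 * (x / x0)" "(x / x0) ^ M = 1" using that by (auto simp: power_divide)
      then show "x \<in> (\<lambda>h. x0 * h) ` H" unfolding H_def by blast
    qed
    then show ?thesis by (meson card_image_le card_mono finite le_trans)
  qed
  have "M * k = card ?U" using k by (simp add: card_Diff_singleton)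
  also have "\<dots> \<le> card (\<Union>y\<in>?f ` ?U. {x \<in> ?U. ?f x = y})" by (intro card_mono) auto
  also have "\<dots> \<le> (\<Sum>y\<in>?f ` ?U. card {x \<in> ?U. ?f x = y})" by (rule card_UN_le) simp
  also have "\<dots> \<le> (\<Sum>y\<in>?f ` ?U. card H)" using card_fibre by (intro sum_mono) blast
  also have "\<dots> \<le> k * card H" using card_image by simp
  finally have "M \<le> card H" using \<open>k > 0\<close> by (simp add: mult.commute)
  with card_roots_of_unity_le[OF \<open>M > 0\<close>, where 'a='a] show ?thesis unfolding H_def by simp
qed

lemma CHAR_eq_of_card_eq_prime_power:
  fixes p :: nat
  assumes "prime p" and "CARD('a::{field,finite}) = p ^ m"
  shows "CHAR('a) = p"
proof -
  have "prime CHAR('a)" by (rule prime_CHAR_semidom) (simp add: finite_imp_CHAR_pos)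
  moreover have "CHAR('a) dvd p ^ m" using CHAR_dvd_CARD[where 'a='a] assms(2) by simp
  ultimately show ?thesis using assms(1) prime_dvd_power primes_dvd_imp_eq by blast
qed

lemma prime_power_eq_CHAR_power:
  assumes "prime_power q" and "CARD('a::{field,finite}) = q ^ n"
  obtains k where "q = CHAR('a) ^ k"
proof -
  obtain p k where "prime p" "q = p ^ k" using assms(1) unfolding prime_power_def by blast
  with assms(2) have "CHAR('a) = p" by (simp add: CHAR_eq_of_card_eq_prime_power power_mult [symmetric])
  with \<open>q = p ^ k\<close> show ?thesis using that by blast
qed

lemma prime_power_ge_2:
  assumes "prime_power q"
  shows "q \<ge> 2"
proof -
  obtain p k where "prime p" "k > 0" "q = p ^ k" using assms unfolding prime_power_def by blast
  then have "p \<le> q" using self_le_power[OF prime_ge_1_nat] by blast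
  with \<open>prime p\<close> show ?thesis using prime_ge_2_nat by (blast intro: le_trans)
qed

section \<open>Subfields and their translates\<close>

lemma subfield_of_order_zero: "q > 0 \<Longrightarrow> 0 \<in> subfield_of_order q t"
  by (simp add: subfield_of_order_def)

lemma subfield_of_order_one: "1 \<in> subfield_of_order q t"
  by (simp add: subfield_of_order_def)

lemma subfield_of_order_mult:
  "x \<in> subfield_of_order q t \<Longrightarrow> y \<in> subfield_of_order q t \<Longrightarrow> x * y \<in> subfield_of_order q t"
  by (simp add: subfield_of_order_def power_mult_distrib)

lemma subfield_of_order_inverse:
  "x \<in> subfield_of_order q t \<Longrightarrow> inverse x \<in> subfield_of_order q t"
  by (simp add: subfield_of_order_def power_inverse)

lemma subfield_of_order_divide:
  "x \<in> subfield_of_order q t \<Longrightarrow> y \<in> subfield_of_order q t \<Longrightarrow> x / y \<in> subfield_of_order q t"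
  by (simp add: divide_inverse subfield_of_order_mult subfield_of_order_inverse)

lemma subfield_of_order_power_additive:
  fixes x y :: "'a::{field,finite}"
  assumes "q = CHAR('a) ^ k"
  shows "(x + y) ^ (q ^ t) = x ^ (q ^ t) + y ^ (q ^ t)"
proof -
  have "prime CHAR('a)" by (rule prime_CHAR_semidom) (simp add: finite_imp_CHAR_pos)
  moreover have "q ^ t = CHAR('a) ^ (k * t)" by (simp add: assms power_mult)
  ultimately show ?thesis by (rule freshmans_dream')
qed

lemma subfield_of_order_add:
  fixes x y :: "'a::{field,finite}"
  assumes "q = CHAR('a) ^ k" "x \<in> subfield_of_order q t" "y \<in> subfield_of_order q t"
  shows "x + y \<in> subfield_of_order q t"
  using assms by (simp add: subfield_of_order_def subfield_of_order_power_additive)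

lemma subfield_of_order_diff:
  fixes x y :: "'a::{field,finite}"
  assumes "q = CHAR('a) ^ k" "x \<in> subfield_of_order q t" "y \<in> subfield_of_order q t"
  shows "x - y \<in> subfield_of_order q t"
proof -
  have "x = (x - y) ^ (q ^ t) + y"
    using subfield_of_order_power_additive[OF assms(1), of "x - y" y t] assms(2,3)
    by (simp add: subfield_of_order_def)
  then show ?thesis by (simp add: subfield_of_order_def algebra_simps)
qed

lemma subfield_of_order_mono:
  assumes "t dvd t'"
  shows "subfield_of_order q t \<subseteq> (subfield_of_order q t' :: 'a::{field,finite} set)"
proof
  fix x :: 'a
  assume x: "x \<in> subfield_of_order q t"
  obtain s where "t' = t * s" using assms by blast
  have "x ^ (q ^ (t * s)) = x"
  proof (induction s)
    case (Suc s)
    have "x ^ (q ^ (t * Suc s)) = (x ^ (q ^ t)) ^ (q ^ (t * s))"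
      by (simp add: power_add power_mult)
    with x Suc show ?case by (simp add: subfield_of_order_def)
  qed simp
  with \<open>t' = t * s\<close> show "x \<in> subfield_of_order q t'" by (simp add: subfield_of_order_def)
qed

lemma power_minus_one_dvd_power_minus_one:
  fixes a :: nat
  assumes "t dvd n"
  shows "a ^ t - 1 dvd a ^ n - 1"
proof (cases "a = 0")
  case False
  obtain s where "n = t * s" using assms by blast
  have "int (a ^ t) - 1 dvd int (a ^ t) ^ s - 1" by (simp add: power_diff_1_eq)
  with False show ?thesis
    unfolding \<open>n = t * s\<close> power_mult by (simp add: of_nat_diff flip: of_nat_power int_dvd_int_iff)
qed (simp add: power_0_left)

lemma card_subfield_of_order:
  assumes "CARD('a::{field,finite}) = q ^ n" and "q \<ge> 2" and "t dvd n" and "t > 0"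
  shows "card (subfield_of_order q t :: 'a set) = q ^ t"
proof -
  define M where "M = q ^ t - 1"
  have "q ^ t = Suc M" using assms(2,4) unfolding M_def by (simp add: Suc_diff_1)
  have "q \<le> q ^ t" using assms(2,4) by (simp add: self_le_power)
  then have "M > 0" using assms(2) unfolding M_def by linarith
  have "M dvd CARD('a) - 1"
    unfolding M_def assms(1) by (rule power_minus_one_dvd_power_minus_one) fact
  then have card_roots: "card {x::'a. x ^ M = 1} = M" by (rule card_roots_of_unity_eq)
  have "subfield_of_order q t = insert (0::'a) {x. x ^ M = 1}"
    using \<open>q ^ t = Suc M\<close> \<open>M > 0\<close> by (auto simp: subfield_of_order_def mult_cancel_left2)
  moreover have "(0::'a) \<notin> {x. x ^ M = 1}" using \<open>M > 0\<close> by (simp add: power_0_left)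
  ultimately show ?thesis using card_roots \<open>q ^ t = Suc M\<close> by simp
qed

lemma set_scale_set_scale: "set_scale (set_scale U x) y = set_scale U (x * y)"
  for x y :: "'a::semigroup_mult"
  by (simp add: set_scale_def image_image mult.assoc)

lemma set_scale_one [simp]: "set_scale U (1::'a::monoid_mult) = U"
  by (simp add: set_scale_def)

lemma card_set_scale: "c \<noteq> 0 \<Longrightarrow> card (set_scale U c) = card U"
  for c :: "'a::field"
  unfolding set_scale_def by (rule card_image) (auto intro: inj_onI)

lemma zero_in_set_scale: "0 \<in> U \<Longrightarrow> 0 \<in> set_scale U c"
  for c :: "'a::mult_zero"
  unfolding set_scale_def by force

lemma set_scale_add_closed:
  fixes c :: "'a::semiring"
  assumes "\<And>u v. u \<in> U \<Longrightarrow> v \<in> U \<Longrightarrow> u + v \<in> U"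
    and "x \<in> set_scale U c" and "y \<in> set_scale U c"
  shows "x + y \<in> set_scale U c"
  using assms unfolding set_scale_def by (auto simp flip: distrib_right)

lemma set_scale_diff_closed:
  fixes c :: "'a::ring"
  assumes "\<And>u v. u \<in> U \<Longrightarrow> v \<in> U \<Longrightarrow> u - v \<in> U"
    and "x \<in> set_scale U c" and "y \<in> set_scale U c"
  shows "x - y \<in> set_scale U c"
  using assms unfolding set_scale_def by (auto simp flip: left_diff_distrib)

lemma set_scale_subfield_of_order_eq_self_iff:
  fixes c :: "'a::{field,finite}"
  assumes "c \<noteq> 0"
  shows "set_scale (subfield_of_order q t) c = subfield_of_order q t \<longleftrightarrow> c \<in> subfield_of_order q t"
proof
  assume "set_scale (subfield_of_order q t) c = subfield_of_order q t"
  moreover have "1 * c \<in> set_scale (subfield_of_order q t) c"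
    unfolding set_scale_def by (intro imageI subfield_of_order_one)
  ultimately show "c \<in> subfield_of_order q t" by simp
next
  assume c: "c \<in> subfield_of_order q t"
  have "u = u / c * c" for u using assms by simp
  then have "subfield_of_order q t \<subseteq> set_scale (subfield_of_order q t) c"
    unfolding set_scale_def using c by (blast intro: subfield_of_order_divide)
  moreover have "set_scale (subfield_of_order q t) c \<subseteq> subfield_of_order q t"
    unfolding set_scale_def using c by (blast intro: subfield_of_order_mult)
  ultimately show "set_scale (subfield_of_order q t) c = subfield_of_order q t" by blast
qed

lemma set_scale_subfield_of_order_eq_iff:
  fixes a b :: "'a::{field,finite}"
  assumes "a \<noteq> 0" and "b \<noteq> 0"
  shows "set_scale (subfield_of_order q t) a = set_scale (subfield_of_order q t) b
    \<longleftrightarrow> b / a \<in> subfield_of_order q t"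
proof -
  let ?K = "subfield_of_order q t :: 'a set"
  have "set_scale ?K a = set_scale ?K b \<longleftrightarrow> set_scale ?K (b / a) = ?K"
  proof
    assume "set_scale ?K a = set_scale ?K b"
    then have "set_scale (set_scale ?K b) (inverse a) = set_scale (set_scale ?K a) (inverse a)"
      by simp
    with assms(1) show "set_scale ?K (b / a) = ?K" by (simp add: set_scale_set_scale divide_inverse)
  next
    assume "set_scale ?K (b / a) = ?K"
    then have "set_scale (set_scale ?K (b / a)) a = set_scale ?K a" by simp
    with assms(1) show "set_scale ?K a = set_scale ?K b" by (simp add: set_scale_set_scale)
  qed
  also have "\<dots> \<longleftrightarrow> b / a \<in> ?K"
    using assms by (intro set_scale_subfield_of_order_eq_self_iff) simp
  finally show ?thesis .
qed

lemma set_scale_subfield_of_order_inter: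
  fixes a b :: "'a::{field,finite}"
  assumes "q > 0" and "a \<noteq> 0" and "b \<noteq> 0" and "b / a \<notin> subfield_of_order q t"
  shows "set_scale (subfield_of_order q t) a \<inter> set_scale (subfield_of_order q t) b = {0}"
proof -
  have "x = 0" if "u \<in> subfield_of_order q t" "v \<in> subfield_of_order q t" "x = u * a" "x = v * b"
    for x u v
  proof (rule ccontr)
    assume "x \<noteq> 0"
    with that(4) have "v \<noteq> 0" by simp
    with that have "b / a = u / v" using assms(2) by (simp add: field_simps)
    with that(1,2) assms(4) show False by (simp add: subfield_of_order_divide)
  qed
  moreover have "0 \<in> set_scale (subfield_of_order q t) c" for c :: 'a
    by (intro zero_in_set_scale subfield_of_order_zero assms(1))
  ultimately show ?thesis unfolding set_scale_def by blast
qed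

lemma ssum_self:
  fixes V :: "'a::monoid_add set"
  assumes "0 \<in> V" and "\<And>x y. x \<in> V \<Longrightarrow> y \<in> V \<Longrightarrow> x + y \<in> V"
  shows "ssum V V = V"
  unfolding ssum_def using assms by force

lemma card_ssum_of_inter_zero:
  fixes V W :: "'a::ab_group_add set"
  assumes "\<And>x y. x \<in> V \<Longrightarrow> y \<in> V \<Longrightarrow> x - y \<in> V"
    and "\<And>x y. x \<in> W \<Longrightarrow> y \<in> W \<Longrightarrow> x - y \<in> W"
    and "V \<inter> W \<subseteq> {0}"
  shows "card (ssum V W) = card V * card W"
proof -
  have "ssum V W = (\<lambda>(x, y). x + y) ` (V \<times> W)" unfolding ssum_def by auto
  moreover have "inj_on (\<lambda>(x, y). x + y) (V \<times> W)"
  proof (rule inj_onI, clarify)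
    fix x y x' y'
    assume "x \<in> V" "y \<in> W" "x' \<in> V" "y' \<in> W" and sum_eq: "x + y = x' + y'"
    then have "x - x' \<in> V \<inter> W"
      using assms(1,2) by (metis IntI add_diff_cancel_left add_diff_cancel_right' diff_add_eq_diff_diff_swap)
    with assms(3) sum_eq show "x = x' \<and> y = y'" by auto
  qed
  ultimately show ?thesis by (simp add: card_image card_cartesian_product)
qed

lemma sdim_eqI:
  assumes "q \<ge> 2" and "card U = q ^ k"
  shows "sdim q U = k"
  unfolding sdim_def using assms by (auto simp: power_inject_exp)

lemma subspace_dist_scaled_subfield_of_order:
  fixes a b :: "'a::{field,finite}"
  assumes "q = CHAR('a) ^ k" and "q \<ge> 2" and "CARD('a) = q ^ n" and "t dvd n" and "t > 0"
    and "a \<noteq> 0" and "b \<noteq> 0"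
  shows "subspace_dist q (set_scale (subfield_of_order q t) a) (set_scale (subfield_of_order q t) b)
    = (if b / a \<in> subfield_of_order q t then 0 else 2 * t)"
proof -
  let ?K = "subfield_of_order q t :: 'a set"
  have zero_scaled: "0 \<in> set_scale ?K c" for c
    using assms(2) by (intro zero_in_set_scale subfield_of_order_zero) simp
  have card_scaled: "card (set_scale ?K c) = q ^ t" if "c \<noteq> 0" for c
    using that card_subfield_of_order[OF assms(3,2,4,5)] by (simp add: card_set_scale)
  have add_closed: "x + y \<in> set_scale ?K c" if "x \<in> set_scale ?K c" "y \<in> set_scale ?K c" for x y c
    using that by (rule set_scale_add_closed[rotated]) (rule subfield_of_order_add[OF assms(1)])
  have diff_closed: "x - y \<in> set_scale ?K c" if "x \<in> set_scale ?K c" "y \<in> set_scale ?K c" for x y c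
    using that by (rule set_scale_diff_closed[rotated]) (rule subfield_of_order_diff[OF assms(1)])
  show ?thesis
  proof (cases "b / a \<in> ?K")
    case True
    then have "set_scale ?K b = set_scale ?K a"
      using set_scale_subfield_of_order_eq_iff[OF assms(6,7)] by metis
    moreover have "ssum (set_scale ?K a) (set_scale ?K a) = set_scale ?K a"
      using zero_scaled add_closed by (rule ssum_self)
    ultimately show ?thesis using True by (simp add: subspace_dist_def)
  next
    case False
    then have inter: "set_scale ?K a \<inter> set_scale ?K b = {0}"
      using assms(2,6,7) by (intro set_scale_subfield_of_order_inter) simp_all
    then have "card (ssum (set_scale ?K a) (set_scale ?K b)) = q ^ t * q ^ t"
      using diff_closed card_scaled assms(6,7) by (simp add: card_ssum_of_inter_zero)
    then have "sdim q (ssum (set_scale ?K a) (set_scale ?K b)) = 2 * t"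
      using assms(2) by (intro sdim_eqI) (simp_all add: mult_2 power_add)
    moreover have "sdim q (set_scale ?K a \<inter> set_scale ?K b) = 0"
      using assms(2) inter by (intro sdim_eqI) simp_all
    ultimately show ?thesis using False by (simp add: subspace_dist_def)
  qed
qed

section \<open>Galois flags and their orbits\<close>

lemma mono_on_subfield_of_order_chain:
  fixes r :: nat and t :: "nat \<Rightarrow> nat"
  assumes "\<forall>i. 1 \<le> i \<and> i \<le> r - 1 \<longrightarrow> t i dvd t (i + 1)"
  shows "mono_on {1..r} (\<lambda>i. subfield_of_order q (t i) :: 'a::{field,finite} set)"
proof (rule mono_onI)
  fix i j assume "i \<in> {1..r}" "j \<in> {1..r}" "i \<le> j"
  from \<open>i \<le> j\<close> \<open>j \<in> {1..r}\<close> have "t i dvd t j"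
  proof (induction j rule: dec_induct)
    case (step m)
    with assms \<open>i \<in> {1..r}\<close> have "t m dvd t (m + 1)" by auto
    with step \<open>i \<in> {1..r}\<close> show ?case by (auto intro: dvd_trans)
  qed simp
  then show "subfield_of_order q (t i) \<subseteq> (subfield_of_order q (t j) :: 'a set)"
    by (rule subfield_of_order_mono)
qed

lemma pos_of_strict_chain:
  fixes t :: "nat \<Rightarrow> nat"
  assumes "1 \<le> t 1" and "\<forall>i. 1 \<le> i \<and> i < r \<longrightarrow> t i < t (i + 1)"
  shows "\<forall>i\<in>{1..r}. t i > 0"
proof
  fix j assume "j \<in> {1..r}"
  then have "1 \<le> j" "j \<le> r" by auto
  then have "t 1 \<le> t j"
  proof (induction j rule: dec_induct)
    case (step m)
    with assms(2) have "t m < t (m + 1)" by auto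
    with step show ?case by simp
  qed simp
  with assms(1) show "t j > 0" by simp
qed

lemma flag_scale_galois_flag:
  "flag_scale (galois_flag q r t) c = map (\<lambda>i. set_scale (subfield_of_order q (t i)) c) [1..<r+1]"
  by (simp add: flag_scale_def galois_flag_def)

lemma flag_scale_galois_flag_eq_iff:
  fixes a b :: "'a::{field,finite}"
  assumes "r \<ge> 1" and "\<forall>i\<in>{1..r}. subfield_of_order q (t 1) \<subseteq> (subfield_of_order q (t i) :: 'a set)"
    and "a \<noteq> 0" and "b \<noteq> 0"
  shows "flag_scale (galois_flag q r t) a = (flag_scale (galois_flag q r t) b :: 'a set list)
    \<longleftrightarrow> b / a \<in> subfield_of_order q (t 1)"
proof -
  have "flag_scale (galois_flag q r t) a = (flag_scale (galois_flag q r t) b :: 'a set list)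
    \<longleftrightarrow> (\<forall>i\<in>{1..r}. b / a \<in> subfield_of_order q (t i))"
    unfolding flag_scale_galois_flag map_eq_conv
    using set_scale_subfield_of_order_eq_iff[OF assms(3,4)] by auto
  also have "\<dots> \<longleftrightarrow> b / a \<in> subfield_of_order q (t 1)" using assms(1,2) by auto
  finally show ?thesis .
qed

lemma flag_dist_scaled_galois_flag:
  fixes a b :: "'a::{field,finite}"
  assumes "q = CHAR('a) ^ k" and "q \<ge> 2" and "CARD('a) = q ^ n"
    and "\<forall>i\<in>{1..r}. t i dvd n \<and> t i > 0" and "a \<noteq> 0" and "b \<noteq> 0"
  shows "flag_dist q (flag_scale (galois_flag q r t) a) (flag_scale (galois_flag q r t) b :: 'a set list)
    = (\<Sum>i\<in>{1..r}. if b / a \<in> subfield_of_order q (t i) then 0 else 2 * t i)"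
proof -
  have "flag_dist q (flag_scale (galois_flag q r t) a) (flag_scale (galois_flag q r t) b :: 'a set list)
    = (\<Sum>i\<in>{1..r}. subspace_dist q (set_scale (subfield_of_order q (t i)) a)
                                    (set_scale (subfield_of_order q (t i)) b))"
    unfolding flag_dist_def flag_scale_galois_flag zip_map_map zip_same_conv_map
    by (simp add: sum_list_distinct_conv_sum_set atLeastLessThanSuc_atLeastAtMost comp_def del: upt_Suc)
  also have "\<dots> = (\<Sum>i\<in>{1..r}. if b / a \<in> subfield_of_order q (t i) then 0 else 2 * t i)"
    using assms by (intro sum.cong refl subspace_dist_scaled_subfield_of_order) auto
  finally show ?thesis .
qed

lemma
  fixes \<beta> :: "'a::monoid_mult"
  assumes "\<beta> ^ N = 1" and "N > 0"
  shows mult_order_pos: "mult_order \<beta> > 0"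
    and power_mult_order: "\<beta> ^ mult_order \<beta> = 1"
  using LeastI[of "\<lambda>k. k > 0 \<and> \<beta> ^ k = 1" N] assms unfolding mult_order_def by auto

lemma cyc_eq_powers_below_mult_order:
  fixes \<beta> :: "'a::monoid_mult"
  assumes "\<beta> ^ N = 1" and "N > 0"
  shows "cyc \<beta> = {\<beta> ^ j | j. j \<le> mult_order \<beta> - 1}"
proof -
  let ?m = "mult_order \<beta>"
  have "\<beta> ^ j = \<beta> ^ (j mod ?m)" for j
  proof -
    have "\<beta> ^ j = \<beta> ^ (?m * (j div ?m) + j mod ?m)" by simp
    also have "\<dots> = (\<beta> ^ ?m) ^ (j div ?m) * \<beta> ^ (j mod ?m)" by (simp only: power_add power_mult)
    finally show ?thesis using power_mult_order[OF assms] by simp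
  qed
  moreover have "j mod ?m \<le> ?m - 1" for j
    using mod_less_divisor[OF mult_order_pos[OF assms], of j] by linarith
  ultimately show ?thesis unfolding cyc_def by blast
qed

lemma orbit_eq_image_cyc:
  fixes \<beta> :: "'a::monoid_mult"
  assumes "\<beta> ^ N = 1" and "N > 0"
  shows "orbit \<beta> F = (\<lambda>\<gamma>. flag_scale F \<gamma>) ` cyc \<beta>"
  by (auto simp: orbit_def cyc_eq_powers_below_mult_order[OF assms])

lemma one_in_cyc: "1 \<in> cyc \<beta>"
  unfolding cyc_def by (metis (mono_tags) mem_Collect_eq power_0)

lemma zero_notin_cyc: "\<beta> \<noteq> 0 \<Longrightarrow> 0 \<notin> cyc \<beta>"
  for \<beta> :: "'a::semiring_1_no_zero_divisors"
  unfolding cyc_def by auto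

lemma cyc_divide_closed:
  fixes \<beta> :: "'a::field"
  assumes "\<beta> ^ N = 1" and "N > 0" and "a \<in> cyc \<beta>" and "b \<in> cyc \<beta>"
  shows "b / a \<in> cyc \<beta>"
proof -
  obtain i j where "a = \<beta> ^ i" "b = \<beta> ^ j" using assms(3,4) unfolding cyc_def by blast
  have "\<beta> ^ i * \<beta> ^ (i * (N - 1)) = (\<beta> ^ N) ^ i"
    using assms(2) by (simp flip: power_add power_mult) (simp add: algebra_simps)
  then have "inverse (\<beta> ^ i) = \<beta> ^ (i * (N - 1))" using assms(1) by (simp add: inverse_unique)
  then have "b / a = \<beta> ^ (j + i * (N - 1))"
    by (simp add: \<open>a = \<beta> ^ i\<close> \<open>b = \<beta> ^ j\<close> divide_inverse power_add)
  then show ?thesis unfolding cyc_def by blast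
qed

lemma stab_subfield_of_order:
  fixes \<beta> :: "'a::{field,finite}"
  assumes "\<beta> \<noteq> 0"
  shows "stab \<beta> (subfield_of_order q t) = cyc \<beta> \<inter> subfield_of_order q t"
proof -
  have "set_scale (subfield_of_order q t) \<gamma> = subfield_of_order q t \<longleftrightarrow> \<gamma> \<in> subfield_of_order q t"
    if "\<gamma> \<in> cyc \<beta>" for \<gamma>
    using that zero_notin_cyc[OF assms] by (intro set_scale_subfield_of_order_eq_self_iff) auto
  then show ?thesis unfolding stab_def by auto
qed

lemma min_flag_dist_image:
  fixes G :: "'a::field set" and f :: "'a \<Rightarrow> 'b::plus set list"
  assumes "finite G" and "1 \<in> G" and "\<And>a b. a \<in> G \<Longrightarrow> b \<in> G \<Longrightarrow> b / a \<in> G"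
    and eq_iff: "\<And>a b. a \<in> G \<Longrightarrow> b \<in> G \<Longrightarrow> f a = f b \<longleftrightarrow> b / a \<in> H"
    and dist_eq: "\<And>a b. a \<in> G \<Longrightarrow> b \<in> G \<Longrightarrow> flag_dist q (f a) (f b) = D (b / a)"
  shows "min_flag_dist q (f ` G) = (if G \<subseteq> H then 0 else Min (D ` (G - H)))"
  \<comment> \<open>All distances within \<open>f ` G\<close> already occur as distances to \<open>f 1\<close>.\<close>
proof (cases "G \<subseteq> H")
  case True
  then have "f ` G = {f 1}" using assms(2) eq_iff[OF assms(2)] by force
  with True show ?thesis by (simp add: min_flag_dist_def)
next
  case False
  then obtain \<gamma> where "\<gamma> \<in> G" "\<gamma> \<notin> H" by blast
  then have "f 1 \<noteq> f \<gamma>" using eq_iff[OF assms(2)] by simp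
  moreover have "{f 1, f \<gamma>} \<subseteq> f ` G" using assms(2) \<open>\<gamma> \<in> G\<close> by blast
  ultimately have "\<not> card (f ` G) \<le> 1"
    using card_mono[of "f ` G" "{f 1, f \<gamma>}"] assms(1) by auto
  moreover have "{flag_dist q F F' | F F'. F \<in> f ` G \<and> F' \<in> f ` G \<and> F \<noteq> F'} = D ` (G - H)"
  proof (intro equalityI subsetI)
    fix x
    assume "x \<in> {flag_dist q F F' | F F'. F \<in> f ` G \<and> F' \<in> f ` G \<and> F \<noteq> F'}"
    then obtain a b where "a \<in> G" "b \<in> G" "f a \<noteq> f b" "x = flag_dist q (f a) (f b)" by blast
    then show "x \<in> D ` (G - H)" using assms(3) eq_iff dist_eq by (metis DiffI imageI)
  next
    fix x
    assume "x \<in> D ` (G - H)"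
    then obtain \<gamma> where "\<gamma> \<in> G" "\<gamma> \<notin> H" "x = D \<gamma>" by blast
    then have "f 1 \<noteq> f \<gamma>" "x = flag_dist q (f 1) (f \<gamma>)"
      using eq_iff[OF assms(2)] dist_eq[OF assms(2)] by simp_all
    with assms(2) \<open>\<gamma> \<in> G\<close> show "x \<in> {flag_dist q F F' | F F'. F \<in> f ` G \<and> F' \<in> f ` G \<and> F \<noteq> F'}"
      by blast
  qed
  ultimately show ?thesis using False by (simp add: min_flag_dist_def)
qed

lemma min_flag_dist_orbit_galois_flag:
  fixes \<beta> :: "'a::{field,finite}"
  assumes "q = CHAR('a) ^ k" and "q \<ge> 2" and "CARD('a) = q ^ n" and "r \<ge> 1"
    and "\<forall>i\<in>{1..r}. t i dvd n \<and> t i > 0"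
    and "mono_on {1..r} (\<lambda>i. subfield_of_order q (t i) :: 'a set)" and "\<beta> \<noteq> 0"
  shows "min_flag_dist q (orbit \<beta> (galois_flag q r t :: 'a set list))
    = (if cyc \<beta> \<subseteq> subfield_of_order q (t 1) then 0
       else Min ((\<lambda>\<gamma>. \<Sum>i\<in>{1..r}. if \<gamma> \<in> subfield_of_order q (t i) then 0 else 2 * t i)
                   ` (cyc \<beta> - subfield_of_order q (t 1))))"
proof -
  have \<beta>_root: "\<beta> ^ (CARD('a) - 1) = 1" "CARD('a) - 1 > 0"
    using power_card_minus_one_eq_one[OF assms(7)] two_le_card_field[where 'a='a] by auto
  have nested: "\<forall>i\<in>{1..r}. subfield_of_order q (t 1) \<subseteq> (subfield_of_order q (t i) :: 'a set)"
    using assms(4) by (intro ballI mono_onD[OF assms(6)]) auto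
  show ?thesis
    unfolding orbit_eq_image_cyc[OF \<beta>_root]
  proof (rule min_flag_dist_image)
    fix a b assume "a \<in> cyc \<beta>" "b \<in> cyc \<beta>"
    then have "a \<noteq> 0" "b \<noteq> 0" using zero_notin_cyc[OF assms(7)] by auto
    then show "flag_scale (galois_flag q r t) a = flag_scale (galois_flag q r t) b
        \<longleftrightarrow> b / a \<in> subfield_of_order q (t 1)"
      by (rule flag_scale_galois_flag_eq_iff[OF assms(4) nested])
    from \<open>a \<noteq> 0\<close> \<open>b \<noteq> 0\<close> show "flag_dist q (flag_scale (galois_flag q r t) a) (flag_scale (galois_flag q r t) b)
      = (\<Sum>i\<in>{1..r}. if b / a \<in> subfield_of_order q (t i) then 0 else 2 * t i)"
      by (rule flag_dist_scaled_galois_flag[OF assms(1-3,5)])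
  qed (simp_all add: one_in_cyc cyc_divide_closed[OF \<beta>_root])
qed

section \<open>Chains of nested subsets\<close>

lemma strict_mono_on_prefix_sums:
  fixes t :: "nat \<Rightarrow> nat"
  assumes "\<forall>i\<in>{1..r}. t i > 0"
  shows "strict_mono_on {..r} (\<lambda>k. \<Sum>i=1..k. t i)"
proof (rule strict_mono_onI)
  fix a b assume "a \<in> {..r}" "b \<in> {..r}" "a < b"
  with assms show "(\<Sum>i=1..a. t i) < (\<Sum>i=1..b. t i)"
    by (intro sum_strict_mono2[where b = b]) auto
qed

lemma prefix_sums_eq_iff:
  fixes t :: "nat \<Rightarrow> nat"
  assumes "\<forall>i\<in>{1..r}. t i > 0" and "a \<le> r" and "b \<le> r"
  shows "(\<Sum>i=1..a. t i) = (\<Sum>i=1..b. t i) \<longleftrightarrow> a = b"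
  using strict_mono_on_eq[OF strict_mono_on_prefix_sums[OF assms(1)]] assms(2,3) by simp

lemma prefix_sums_pos:
  fixes t :: "nat \<Rightarrow> nat"
  assumes "\<forall>i\<in>{1..r}. t i > 0" and "1 \<le> a" and "a \<le> r"
  shows "(\<Sum>i=1..a. t i) > 0"
  using strict_mono_on_less[OF strict_mono_on_prefix_sums[OF assms(1)], of 0 a] assms(2,3) by simp

text \<open>\<open>j = r + 1\<close> encodes that \<open>S\<close> does not grow within \<open>{1..r}\<close>.\<close>

definition is_first_growth :: "(nat \<Rightarrow> 'a set) \<Rightarrow> nat \<Rightarrow> nat \<Rightarrow> bool" where
  "is_first_growth S r j \<longleftrightarrow>
     2 \<le> j \<and> j \<le> r + 1 \<and> (\<forall>k\<in>{2..<j}. \<not> S 1 \<subset> S k) \<and> (j \<le> r \<longrightarrow> S 1 \<subset> S j)"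

lemma is_first_growth_exists:
  assumes "r \<ge> 1"
  obtains j where "is_first_growth S r j"
proof (cases "\<exists>j\<in>{2..r}. S 1 \<subset> S j")
  case True
  define j where "j = (LEAST j. j \<in> {2..r} \<and> S 1 \<subset> S j)"
  have j: "j \<in> {2..r}" "S 1 \<subset> S j" using True unfolding j_def by (metis (mono_tags, lifting) LeastI)+
  have before_j: "\<not> (k \<in> {2..r} \<and> S 1 \<subset> S k)" if "k < j" for k
    using that unfolding j_def by (rule not_less_Least)
  have "is_first_growth S r j"
    unfolding is_first_growth_def
  proof (intro conjI ballI impI)
    fix k assume "k \<in> {2..<j}"
    with j(1) before_j[of k] show "\<not> S 1 \<subset> S k" by auto
  qed (use j in auto)
  then show ?thesis by (rule that)
next
  case False
  then have "is_first_growth S r (r + 1)" using assms unfolding is_first_growth_def by auto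
  then show ?thesis by (rule that)
qed

lemma is_first_growth_unique:
  assumes "is_first_growth S r j" and "is_first_growth S r j'"
  shows "j = j'"
proof -
  have "\<not> a < b" if "is_first_growth S r a" "is_first_growth S r b" for a b
  proof
    assume "a < b"
    with that have "a \<in> {2..<b}" "a \<le> r" unfolding is_first_growth_def by auto
    with that show False unfolding is_first_growth_def by blast
  qed
  with assms show ?thesis by (meson linorder_neqE_nat)
qed

lemma is_first_growth_beyond_iff:
  assumes "r \<ge> 1" and "mono_on {1..r} S"
  shows "is_first_growth S r (r + 1) \<longleftrightarrow> S 1 = S r"
proof
  assume first: "is_first_growth S r (r + 1)"
  show "S 1 = S r"
  proof (cases "r = 1")
    case False
    with assms(1) first have "\<not> S 1 \<subset> S r" unfolding is_first_growth_def by auto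
    moreover have "S 1 \<subseteq> S r" using assms by (intro mono_onD[OF assms(2)]) auto
    ultimately show ?thesis by blast
  qed simp
next
  assume "S 1 = S r"
  moreover have "S k \<subseteq> S r" if "k \<in> {2..<r + 1}" for k using that by (intro mono_onD[OF assms(2)]) auto
  ultimately have "\<forall>k\<in>{2..<r + 1}. \<not> S 1 \<subset> S k" by blast
  with assms(1) show "is_first_growth S r (r + 1)" unfolding is_first_growth_def by simp
qed

lemma is_first_growth_iff:
  assumes "mono_on {1..r} S" and "j \<in> {2..r}"
  shows "is_first_growth S r j \<longleftrightarrow> S 1 \<noteq> S r \<and> S 1 \<subset> S j \<and> (\<forall>k\<in>{2..<j}. \<not> S 1 \<subset> S k)"
proof -
  have "S j \<subseteq> S r" using assms(2) by (intro mono_onD[OF assms(1)]) auto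
  with assms(2) show ?thesis unfolding is_first_growth_def by auto
qed

lemma nested_weight_ge:
  fixes t :: "nat \<Rightarrow> nat"
  assumes "j \<le> r + 1" and "\<forall>i\<in>{1..j-1}. \<gamma> \<notin> K i"
  shows "2 * (\<Sum>i=1..j-1. t i) \<le> (\<Sum>i\<in>{1..r}. if \<gamma> \<in> K i then 0 else 2 * t i)"
proof -
  have "2 * (\<Sum>i=1..j-1. t i) = (\<Sum>i=1..j-1. if \<gamma> \<in> K i then 0 else 2 * t i)"
    using assms(2) by (simp add: sum_distrib_left)
  also have "\<dots> \<le> (\<Sum>i\<in>{1..r}. if \<gamma> \<in> K i then 0 else 2 * t i)"
    using assms(1) by (intro sum_mono2) auto
  finally show ?thesis .
qed

lemma nested_weight_eq:
  fixes t :: "nat \<Rightarrow> nat"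
  assumes "j \<in> {1..r+1}" and "\<forall>i\<in>{1..j-1}. \<gamma> \<notin> K i" and "\<forall>i\<in>{j..r}. \<gamma> \<in> K i"
  shows "(\<Sum>i\<in>{1..r}. if \<gamma> \<in> K i then 0 else 2 * t i) = 2 * (\<Sum>i=1..j-1. t i)"
proof -
  have "{1..r} = {1..j-1} \<union> {j..r}" using assms(1) by auto
  then have "(\<Sum>i\<in>{1..r}. if \<gamma> \<in> K i then 0 else 2 * t i)
      = (\<Sum>i=1..j-1. if \<gamma> \<in> K i then 0 else 2 * t i)"
    using assms(3) by (simp add: sum.union_disjoint)
  also have "\<dots> = 2 * (\<Sum>i=1..j-1. t i)" using assms(2) by (simp add: sum_distrib_left)
  finally show ?thesis .
qed

lemma min_nested_weight:
  fixes Z :: "'a set" and K :: "nat \<Rightarrow> 'a set" and t :: "nat \<Rightarrow> nat"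
  assumes "finite Z" and "mono_on {1..r} K" and "\<not> Z \<subseteq> K 1"
    and first: "is_first_growth (\<lambda>i. Z \<inter> K i) r j"
  shows "Min ((\<lambda>\<gamma>. \<Sum>i\<in>{1..r}. if \<gamma> \<in> K i then 0 else 2 * t i) ` (Z - K 1))
    = 2 * (\<Sum>i=1..j-1. t i)"
proof -
  let ?w = "\<lambda>\<gamma>. \<Sum>i\<in>{1..r}. if \<gamma> \<in> K i then 0 else 2 * t i"
  have j: "j \<in> {2..r+1}" using first unfolding is_first_growth_def by auto
  have outside: "\<forall>i\<in>{1..j-1}. \<gamma> \<notin> K i" if "\<gamma> \<in> Z - K 1" for \<gamma>
  proof (intro ballI notI)
    fix i assume i: "i \<in> {1..j-1}" "\<gamma> \<in> K i"
    with that have "i \<noteq> 1" by auto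
    with i j have "i \<in> {2..<j}" by auto
    moreover have "K 1 \<subseteq> K i" using i j by (intro mono_onD[OF assms(2)]) auto
    ultimately show False using first that i(2) unfolding is_first_growth_def by blast
  qed
  obtain \<gamma> where \<gamma>: "\<gamma> \<in> Z - K 1" "\<forall>i\<in>{j..r}. \<gamma> \<in> K i"
  proof (cases "j \<le> r")
    case True
    with first have "Z \<inter> K 1 \<subset> Z \<inter> K j" by (simp add: is_first_growth_def)
    then obtain \<gamma> where "\<gamma> \<in> Z \<inter> K j" "\<gamma> \<notin> K 1" by blast
    moreover have "K j \<subseteq> K i" if "i \<in> {j..r}" for i using that j by (intro mono_onD[OF assms(2)]) auto
    ultimately show ?thesis using that by blast
  next
    case False
    from assms(3) obtain \<gamma> where "\<gamma> \<in> Z - K 1" by blast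
    show ?thesis by (rule that[OF \<open>\<gamma> \<in> Z - K 1\<close>]) (use False in auto)
  qed
  show ?thesis
  proof (rule Min_eqI)
    show "finite (?w ` (Z - K 1))" using assms(1) by simp
    show "2 * (\<Sum>i=1..j-1. t i) \<le> y" if "y \<in> ?w ` (Z - K 1)" for y
    proof -
      from that obtain \<delta> where "\<delta> \<in> Z - K 1" "y = ?w \<delta>" by blast
      moreover have "2 * (\<Sum>i=1..j-1. t i) \<le> ?w \<delta>"
        using j outside[OF \<open>\<delta> \<in> Z - K 1\<close>] by (intro nested_weight_ge) auto
      ultimately show ?thesis by simp
    qed
    have "?w \<gamma> = 2 * (\<Sum>i=1..j-1. t i)" using j outside[OF \<gamma>(1)] \<gamma>(2) by (intro nested_weight_eq) auto
    then show "2 * (\<Sum>i=1..j-1. t i) \<in> ?w ` (Z - K 1)" by (intro rev_image_eqI[OF \<gamma>(1)]) simp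
  qed
qed

lemma nested_min_weight_classification:
  fixes Z :: "'a set" and K S :: "nat \<Rightarrow> 'a set" and t :: "nat \<Rightarrow> nat"
  assumes "finite Z" and "r \<ge> 1" and t_pos: "\<forall>i\<in>{1..r}. t i > 0" and "mono_on {1..r} K"
    and S: "S = (\<lambda>i. Z \<inter> K i)"
    and d: "d = (if Z \<subseteq> K 1 then 0
                 else Min ((\<lambda>\<gamma>. \<Sum>i\<in>{1..r}. if \<gamma> \<in> K i then 0 else 2 * t i) ` (Z - K 1)))"
  shows "d \<in> {0} \<union> {2 * (\<Sum>i=1..k. t i) | k. k \<in> {1..r}}
    \<and> (d = 0 \<longleftrightarrow> S 1 = Z \<and> S r = Z)
    \<and> (d = 2 * (\<Sum>i=1..r. t i) \<longleftrightarrow> S 1 = S r \<and> S 1 \<noteq> Z)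
    \<and> (\<forall>j\<in>{2..r}. d = 2 * (\<Sum>i=1..j-1. t i) \<longleftrightarrow>
          S 1 \<noteq> S r \<and> S 1 \<subset> S j \<and> (\<forall>k\<in>{2..<j}. \<not> S 1 \<subset> S k))"
proof -
  let ?ps = "\<lambda>k. \<Sum>i=1..k. t i"
  have S_mono: "mono_on {1..r} S" using assms(4) unfolding S monotone_on_def by blast
  have d_ne_ps: "d \<noteq> 2 * ?ps (j - 1)" if "d = 0" "j \<in> {2..r+1}" for j
  proof -
    have "?ps (j - 1) > 0" using that(2) by (intro prefix_sums_pos[OF t_pos]) auto
    with \<open>d = 0\<close> show ?thesis by linarith
  qed
  show ?thesis
  proof (cases "Z \<subseteq> K 1")
    case True
    then have "d = 0" "S 1 = Z" using d S by auto
    moreover have "S r = Z" using \<open>S 1 = Z\<close> mono_onD[OF S_mono, of 1 r] assms(2) S by auto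
    moreover have "\<not> S 1 \<subset> S j" for j using \<open>S 1 = Z\<close> S by auto
    ultimately show ?thesis using d_ne_ps[of "r + 1"] d_ne_ps assms(2) by auto
  next
    case False
    obtain j0 where first: "is_first_growth S r j0" using is_first_growth_exists[OF assms(2)] .
    have j0: "j0 \<in> {2..r+1}" using first by (auto simp: is_first_growth_def)
    have d_j0: "d = 2 * ?ps (j0 - 1)"
      using min_nested_weight[OF assms(1,4) False first[unfolded S]] False d by simp
    have d_eq_iff: "d = 2 * ?ps (j - 1) \<longleftrightarrow> is_first_growth S r j" if "j \<in> {2..r+1}" for j
    proof -
      have "d = 2 * ?ps (j - 1) \<longleftrightarrow> j0 - 1 = j - 1"
        using d_j0 prefix_sums_eq_iff[OF t_pos, of "j0 - 1" "j - 1"] j0 that by auto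
      also have "\<dots> \<longleftrightarrow> j0 = j" using j0 that by auto
      also have "\<dots> \<longleftrightarrow> is_first_growth S r j" using first is_first_growth_unique by metis
      finally show ?thesis .
    qed
    have "d \<in> {2 * ?ps k | k. k \<in> {1..r}}" using d_j0 j0 by force
    moreover have "S 1 \<noteq> Z" "d \<noteq> 0" using False S d_ne_ps[OF _ j0] d_j0 by auto
    ultimately show ?thesis
      using d_eq_iff[of "r + 1"] is_first_growth_beyond_iff[OF assms(2) S_mono]
        d_eq_iff is_first_growth_iff[OF S_mono] assms(2) by auto
  qed
qed

theorem theorem4p14:
  fixes \<beta> :: "'a::{field,finite}" and q n r :: nat and t :: "nat \<Rightarrow> nat"
  assumes "prime_power q"
    and "CARD('a) = q ^ n"
    and "r \<ge> 1"
    and "1 \<le> t 1"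
    and "\<forall>i. 1 \<le> i \<and> i < r \<longrightarrow> t i < t (i + 1)"
    and "t r < n"
    and "\<forall>i\<in>{1..r}. t i dvd n"
    and "\<forall>i. 1 \<le> i \<and> i \<le> r - 1 \<longrightarrow> t i dvd t (i + 1)"
    and "\<beta> \<noteq> 0"
  defines "S \<equiv> (\<lambda>i. stab \<beta> (subfield_of_order q (t i) :: 'a set))"
    and "d \<equiv> min_flag_dist q (orbit \<beta> (galois_flag q r t :: 'a set list))"
  shows "(\<forall>i\<in>{1..r}. S i = cyc \<beta> \<inter> (subfield_of_order q (t i) - {0}))
    \<and> d \<in> {0} \<union> {2 * (\<Sum>i=1..k. t i) | k. k \<in> {1..r}}
    \<and> (d = 0 \<longleftrightarrow> S 1 = cyc \<beta> \<and> S r = cyc \<beta>)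
    \<and> (d = 2 * (\<Sum>i=1..r. t i) \<longleftrightarrow> S 1 = S r \<and> S 1 \<noteq> cyc \<beta>)
    \<and> (\<forall>j\<in>{2..r}. d = 2 * (\<Sum>i=1..j-1. t i) \<longleftrightarrow>
          S 1 \<noteq> S r \<and> S 1 \<subset> S j \<and> (\<forall>k\<in>{2..<j}. \<not> S 1 \<subset> S k))"
proof -
  obtain k where q_char: "q = CHAR('a) ^ k" using prime_power_eq_CHAR_power[OF assms(1,2)] .
  have t_pos: "\<forall>i\<in>{1..r}. t i > 0" using pos_of_strict_chain[OF assms(4,5)] .
  have K_mono: "mono_on {1..r} (\<lambda>i. subfield_of_order q (t i) :: 'a set)"
    using mono_on_subfield_of_order_chain[OF assms(8)] .
  have S_eq: "S = (\<lambda>i. cyc \<beta> \<inter> subfield_of_order q (t i))"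
    unfolding S_def using stab_subfield_of_order[OF assms(9)] by auto
  have t_dvd_pos: "\<forall>i\<in>{1..r}. t i dvd n \<and> t i > 0" using assms(7) t_pos by blast
  note d_eq = min_flag_dist_orbit_galois_flag[OF q_char prime_power_ge_2[OF assms(1)] assms(2,3)
      t_dvd_pos K_mono assms(9), folded d_def]
  have stabilisers: "\<forall>i\<in>{1..r}. S i = cyc \<beta> \<inter> (subfield_of_order q (t i) - {0})"
    using S_eq zero_notin_cyc[OF assms(9)] by auto
  from stabilisers nested_min_weight_classification[OF finite assms(3) t_pos K_mono S_eq d_eq]
  show ?thesis by (rule conjI)
qed

end
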